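(* Let $(G,Y)$ be a finite $C$-group and let $s=s'\cdot s''\in S(G,Y)^G$ with $\tau_i(s)\ge 2n_ip_i+1$ and $\tau_i(s'')=0$ for some index $i$. Then $s$ can be written in the form $s=s_{\Gamma_i}\cdot s_i\cdot s''$ where $s_i\cdot s''\in S(G,Y)^G$ and $s_{\Gamma_i}=\prod_{j=1}^{n_i}x_{y_{i,j}}^{p_i}$.
   Context: A finite $C$-group is a pair $(G,Y)$ with $Y$ a finite conjugation-invariant subset of the group $G$, $1\notin Y$, such that $G$ has a presentation with generators the elements of $Y$ and defining relations all of the form $z^{-1}yz=y'$ ($y,y',z\in Y$). $Y=C_1\sqcup\dots\sqcup C_m$ is the decomposition into conjugacy classes of $G$, enumerated $C_i=\{y_{i,1},\dots,y_{i,n_i}\}$; $p_i$ is the least $p\ge1$ with $y^p$ central in $G$ for $y\in C_i$. The factorization semigroup $S(G,Y)$ is generated by symbols $x_y$, $y\in Y$, subject to $x_{g_1}x_{g_2}=x_{g_2}x_{g_2^{-1}g_1g_2}=x_{g_1g_2g_1^{-1}}x_{g_1}$ ($g_1,g_2\in Y$). For $s=x_{g_1}\cdots x_{g_n}$, $G_s$ is the subgroup generated by $g_1,\dots,g_n$ (well defined), $S(G,Y)^G=\{s:G_s=G\}$, and $\tau_i(s)$ is the number of factors of $s$ from $\{x_y:y\in C_i\}$. *)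

theory Defs
  imports "HOL-Algebra.Algebra"
begin

fun letter_eval :: "('g, 'b) monoid_scheme \<Rightarrow> 'g \<times> bool \<Rightarrow> 'g" where
  "letter_eval G (y, False) = y"
| "letter_eval G (y, True) = inv\<^bsub>G\<^esub> y"

definition word_eval :: "('g, 'b) monoid_scheme \<Rightarrow> ('g \<times> bool) list \<Rightarrow> 'g" where
  "word_eval G w = foldr (\<lambda>l acc. letter_eval G l \<otimes>\<^bsub>G\<^esub> acc) w \<one>\<^bsub>G\<^esub>"

(* one-step relation of the group presented by generators Y and relators R, where a triple
   (y, y', z) \<in> R encodes the defining relation z^{-1} y z = y', i.e. the relator z^{-1} y z y'^{-1} *)
inductive pres_step :: "'g set \<Rightarrow> ('g \<times> 'g \<times> 'g) set \<Rightarrow> ('g \<times> bool) list \<Rightarrow> ('g \<times> bool) list \<Rightarrow> bool"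
  for Y R where
  free_red: "a \<in> Y \<Longrightarrow> pres_step Y R (u @ [(a, b), (a, \<not> b)] @ v) (u @ v)"
| relator: "(y, y', z) \<in> R \<Longrightarrow>
    pres_step Y R (u @ [(z, True), (y, False), (z, False), (y', True)] @ v) (u @ v)"

definition pres_eq :: "'g set \<Rightarrow> ('g \<times> 'g \<times> 'g) set \<Rightarrow> ('g \<times> bool) list \<Rightarrow> ('g \<times> bool) list \<Rightarrow> bool" where
  "pres_eq Y R = equivclp (pres_step Y R)"

definition finite_C_group :: "('g, 'b) monoid_scheme \<Rightarrow> 'g set \<Rightarrow> bool" where
  "finite_C_group G Y \<longleftrightarrow>
     group G \<and> Y \<subseteq> carrier G \<and> finite Y \<and> \<one>\<^bsub>G\<^esub> \<notin> Y \<and>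
     (\<forall>g \<in> carrier G. \<forall>y \<in> Y. g \<otimes>\<^bsub>G\<^esub> y \<otimes>\<^bsub>G\<^esub> inv\<^bsub>G\<^esub> g \<in> Y) \<and>
     (\<exists>R. R \<subseteq> Y \<times> Y \<times> Y \<and>
        (\<forall>(y, y', z) \<in> R. inv\<^bsub>G\<^esub> z \<otimes>\<^bsub>G\<^esub> y \<otimes>\<^bsub>G\<^esub> z = y') \<and>
        (\<forall>g \<in> carrier G. \<exists>w. set w \<subseteq> Y \<times> UNIV \<and> word_eval G w = g) \<and>
        (\<forall>w1 w2. set w1 \<subseteq> Y \<times> UNIV \<longrightarrow> set w2 \<subseteq> Y \<times> UNIV \<longrightarrow>
            (word_eval G w1 = word_eval G w2 \<longleftrightarrow> pres_eq Y R w1 w2)))"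

definition conj_class :: "('g, 'b) monoid_scheme \<Rightarrow> 'g \<Rightarrow> 'g set" where
  "conj_class G y = {g \<otimes>\<^bsub>G\<^esub> y \<otimes>\<^bsub>G\<^esub> inv\<^bsub>G\<^esub> g | g. g \<in> carrier G}"

definition central :: "('g, 'b) monoid_scheme \<Rightarrow> 'g \<Rightarrow> bool" where
  "central G a \<longleftrightarrow> (\<forall>g \<in> carrier G. a \<otimes>\<^bsub>G\<^esub> g = g \<otimes>\<^bsub>G\<^esub> a)"

definition class_period :: "('g, 'b) monoid_scheme \<Rightarrow> 'g set \<Rightarrow> nat" where
  "class_period G C = (LEAST p. p \<ge> 1 \<and> (\<forall>y \<in> C. central G (y [^]\<^bsub>G\<^esub> p)))"

(* Factorization semigroup S(G,Y): an element x_{g_1}...x_{g_n} is represented by the word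
   [g_1, ..., g_n]; equality in S(G,Y) is the congruence generated by the defining relations
   x_{g1} x_{g2} = x_{g2} x_{g2^{-1} g1 g2} = x_{g1 g2 g1^{-1}} x_{g1}. *)
inductive fact_step :: "('g, 'b) monoid_scheme \<Rightarrow> 'g set \<Rightarrow> 'g list \<Rightarrow> 'g list \<Rightarrow> bool"
  for G Y where
  rel1: "g1 \<in> Y \<Longrightarrow> g2 \<in> Y \<Longrightarrow>
    fact_step G Y (u @ [g1, g2] @ v) (u @ [g2, inv\<^bsub>G\<^esub> g2 \<otimes>\<^bsub>G\<^esub> g1 \<otimes>\<^bsub>G\<^esub> g2] @ v)"
| rel2: "g1 \<in> Y \<Longrightarrow> g2 \<in> Y \<Longrightarrow>
    fact_step G Y (u @ [g1, g2] @ v) (u @ [g1 \<otimes>\<^bsub>G\<^esub> g2 \<otimes>\<^bsub>G\<^esub> inv\<^bsub>G\<^esub> g1, g1] @ v)"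

definition fact_eq :: "('g, 'b) monoid_scheme \<Rightarrow> 'g set \<Rightarrow> 'g list \<Rightarrow> 'g list \<Rightarrow> bool" where
  "fact_eq G Y = equivclp (fact_step G Y)"

(* s \<in> S(G,Y)^G : the factors generate G *)
definition full_fact :: "('g, 'b) monoid_scheme \<Rightarrow> 'g list \<Rightarrow> bool" where
  "full_fact G s \<longleftrightarrow> generate G (set s) = carrier G"

definition tau :: "'g set \<Rightarrow> 'g list \<Rightarrow> nat" where
  "tau C s = length (filter (\<lambda>y. y \<in> C) s)"

end

theory Submission
  imports Defs
begin

(* Since y^p is central for y in the class C, a block x_y^p commutes with every factor, and
   moving it across a single factor x_g turns it into x_(g^-1 y g)^p. As the factors behind
   a block still generate G, it can therefore be turned into x_c^p for any c in C. Blocks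
   are found by pigeonhole: when tau(s') > |C| p, some y in C occurs more than p times in s',
   and all its occurrences can be gathered at the front, leaving one of them behind the block
   so that the rest still generates G. Repeating this |C| times consumes |C| p of the at
   least 2 |C| p + 1 factors from C. *)

lemma equivclp_preserves:
  assumes "equivclp R a b" "P a" "\<And>x y. R x y \<Longrightarrow> P x \<longleftrightarrow> P y"
  shows "P b"
  using assms by (induction rule: equivclp_induct) blast+

lemma equivclp_invariant:
  assumes "equivclp R a b" "P a" "\<And>x y. R x y \<Longrightarrow> P x \<longleftrightarrow> P y"
    and "\<And>x y. R x y \<Longrightarrow> P x \<Longrightarrow> f x = f y"
  shows "f a = f b"
  using assms(1)
proof (induction rule: equivclp_induct)
  case (step y z)
  have "P y" using equivclp_preserves[of R a y P] step.hyps(1) assms(2,3) by blast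
  with step.hyps(2) have "f y = f z" using assms(3,4) by metis
  with step.IH show ?case by simp
qed simp

context group
begin

lemma inv_m_cancel_left [simp]: "x \<in> carrier G \<Longrightarrow> y \<in> carrier G \<Longrightarrow> inv x \<otimes> (x \<otimes> y) = y"
  by (simp add: m_assoc[symmetric])

lemma m_inv_cancel_left [simp]: "x \<in> carrier G \<Longrightarrow> y \<in> carrier G \<Longrightarrow> x \<otimes> (inv x \<otimes> y) = y"
  by (simp add: m_assoc[symmetric])

lemma central_nat_pow:
  assumes "x \<in> carrier G" "central G x"
  shows "central G (x [^] (m::nat))"
proof (induction m)
  case 0
  then show ?case by (simp add: central_def)
next
  case (Suc m)
  then show ?case
    using assms unfolding central_def by (metis m_assoc nat_pow_Suc nat_pow_closed)
qed

lemma conj_eq_imp_commute: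
  assumes "x \<in> carrier G" "w \<in> carrier G" "z \<in> carrier G"
    and "x \<otimes> z \<otimes> inv x = (x \<otimes> w) \<otimes> z \<otimes> inv (x \<otimes> w)"
  shows "w \<otimes> z = z \<otimes> w"
proof -
  have "inv x \<otimes> (x \<otimes> z \<otimes> inv x) \<otimes> x \<otimes> w = inv x \<otimes> ((x \<otimes> w) \<otimes> z \<otimes> inv (x \<otimes> w)) \<otimes> x \<otimes> w"
    using assms(4) by simp
  then show ?thesis using assms(1-3) by (simp add: m_assoc inv_mult_group)
qed

lemma conj_class_conj:
  assumes "g \<in> conj_class G y" "h \<in> carrier G" "y \<in> carrier G"
  shows "h \<otimes> g \<otimes> inv h \<in> conj_class G y"
proof -
  obtain k where k: "k \<in> carrier G" "g = k \<otimes> y \<otimes> inv k"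
    using assms(1) unfolding conj_class_def by auto
  have "h \<otimes> g \<otimes> inv h = (h \<otimes> k) \<otimes> y \<otimes> inv (h \<otimes> k)"
    unfolding k(2) using assms(2,3) k(1) by (simp add: m_assoc inv_mult_group)
  then show ?thesis
    unfolding conj_class_def using assms(2) k(1) by blast
qed

lemma conj_class_conj_iff:
  assumes "g \<in> carrier G" "h \<in> carrier G" "y \<in> carrier G"
  shows "h \<otimes> g \<otimes> inv h \<in> conj_class G y \<longleftrightarrow> g \<in> conj_class G y"
proof
  assume "h \<otimes> g \<otimes> inv h \<in> conj_class G y"
  then have "inv h \<otimes> (h \<otimes> g \<otimes> inv h) \<otimes> inv (inv h) \<in> conj_class G y"
    using assms by (intro conj_class_conj[of "h \<otimes> g \<otimes> inv h"]) auto
  moreover have "inv h \<otimes> (h \<otimes> g \<otimes> inv h) \<otimes> inv (inv h) = g"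
    using assms by (simp add: m_assoc)
  ultimately show "g \<in> conj_class G y" by simp
next
  show "g \<in> conj_class G y \<Longrightarrow> h \<otimes> g \<otimes> inv h \<in> conj_class G y"
    using assms by (intro conj_class_conj)
qed

lemma conj_class_inv_conj_iff:
  "g \<in> carrier G \<Longrightarrow> h \<in> carrier G \<Longrightarrow> y \<in> carrier G \<Longrightarrow>
    inv h \<otimes> g \<otimes> h \<in> conj_class G y \<longleftrightarrow> g \<in> conj_class G y"
  using conj_class_conj_iff[of g "inv h" y] by simp

lemma conj_class_conjugate:
  assumes "a \<in> conj_class G y" "c \<in> conj_class G y" "y \<in> carrier G"
  obtains h where "h \<in> carrier G" "inv h \<otimes> a \<otimes> h = c"
proof -
  obtain ga where ga: "ga \<in> carrier G" "a = ga \<otimes> y \<otimes> inv ga"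
    using assms(1) unfolding conj_class_def by auto
  obtain gc where gc: "gc \<in> carrier G" "c = gc \<otimes> y \<otimes> inv gc"
    using assms(2) unfolding conj_class_def by auto
  have "inv (ga \<otimes> inv gc) \<otimes> (ga \<otimes> y \<otimes> inv ga) \<otimes> (ga \<otimes> inv gc) = gc \<otimes> y \<otimes> inv gc"
    using ga(1) gc(1) assms(3) by (simp add: m_assoc inv_mult_group)
  then show ?thesis
    using that[of "ga \<otimes> inv gc"] ga gc by simp
qed

lemma generate_insert_conj_subset:
  assumes "A \<subseteq> carrier G" "g \<in> carrier G" "h \<in> generate G A"
  shows "generate G (insert (inv h \<otimes> g \<otimes> h) A) \<subseteq> generate G (insert g A)"
proof (rule generate_subgroup_incl)
  let ?H = "generate G (insert g A)"
  have H: "subgroup ?H G" using assms(1,2) by (intro generate_is_subgroup) auto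
  have "h \<in> ?H" using mono_generate[of A "insert g A"] assms(3) by auto
  moreover have "g \<in> ?H" by (auto intro: generate.incl)
  ultimately have "inv h \<otimes> g \<otimes> h \<in> ?H"
    using H by (intro subgroup.m_closed subgroup.m_inv_closed)
  then show "insert (inv h \<otimes> g \<otimes> h) A \<subseteq> ?H" by (auto intro: generate.incl)
qed (use assms(1,2) in \<open>auto intro: generate_is_subgroup\<close>)

lemma generate_insert_conj:
  assumes "A \<subseteq> carrier G" "g \<in> carrier G" "h \<in> generate G A"
  shows "generate G (insert (inv h \<otimes> g \<otimes> h) A) = generate G (insert g A)"
proof
  show "generate G (insert (inv h \<otimes> g \<otimes> h) A) \<subseteq> generate G (insert g A)"
    using generate_insert_conj_subset[OF assms] .
  have h: "h \<in> carrier G" using generate_in_carrier[OF assms(1,3)] .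
  have "generate G (insert (inv (inv h) \<otimes> (inv h \<otimes> g \<otimes> h) \<otimes> inv h) A)
      \<subseteq> generate G (insert (inv h \<otimes> g \<otimes> h) A)"
    using assms(1,2) h generate_m_inv_closed[OF assms(1,3)]
    by (intro generate_insert_conj_subset) auto
  then show "generate G (insert g A) \<subseteq> generate G (insert (inv h \<otimes> g \<otimes> h) A)"
    using assms(2) h by (simp add: m_assoc)
qed

lemma commutes_with_generate:
  assumes "S \<subseteq> carrier G" "x \<in> carrier G" "\<And>s. s \<in> S \<Longrightarrow> x \<otimes> s = s \<otimes> x"
    and "h \<in> generate G S"
  shows "x \<otimes> h = h \<otimes> x"
  using assms(4)
proof (induction rule: generate.induct)
  case one
  then show ?case using assms(2) by simp
next
  case (incl s)
  then show ?case by (rule assms(3))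
next
  case (inv s)
  have s: "s \<in> carrier G" using inv assms(1) by auto
  have "x \<otimes> inv s = inv s \<otimes> (s \<otimes> x) \<otimes> inv s"
    using s assms(2) by (simp add: m_assoc)
  also have "\<dots> = inv s \<otimes> (x \<otimes> s) \<otimes> inv s"
    using assms(3)[OF inv] by simp
  also have "\<dots> = inv s \<otimes> x"
    using s assms(2) by (simp add: m_assoc)
  finally show ?case .
next
  case (eng h1 h2)
  have h: "h1 \<in> carrier G" "h2 \<in> carrier G"
    using eng.hyps generate_in_carrier[OF assms(1)] by auto
  have "x \<otimes> (h1 \<otimes> h2) = h1 \<otimes> (x \<otimes> h2)"
    using h assms(2) eng.IH(1) by (simp add: m_assoc[symmetric])
  also have "\<dots> = h1 \<otimes> h2 \<otimes> x"
    using h assms(2) eng.IH(2) by (simp add: m_assoc)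
  finally show ?case .
qed

lemma central_if_commutes_with_generators:
  assumes "generate G S = carrier G" "S \<subseteq> carrier G" "x \<in> carrier G"
    and "\<And>s. s \<in> S \<Longrightarrow> x \<otimes> s = s \<otimes> x"
  shows "central G x"
  unfolding central_def using assms commutes_with_generate[of S x] by blast

lemma conj_closed_generate:
  assumes "finite R" "R \<subseteq> carrier G" "S \<subseteq> carrier G"
    and closed: "\<And>s b. s \<in> S \<Longrightarrow> b \<in> R \<Longrightarrow> inv s \<otimes> b \<otimes> s \<in> R"
    and "h \<in> generate G S" "b \<in> R"
  shows "inv h \<otimes> b \<otimes> h \<in> R"
  using assms(5,6)
proof (induction arbitrary: b rule: generate.induct)
  case one
  then show ?case using assms(2) by auto
next
  case (incl s)
  then show ?case by (rule closed)
next
  case (inv s)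
  \<comment> \<open>conjugation by \<open>s\<close> maps the finite set \<open>R\<close> injectively into itself, hence onto itself\<close>
  have s: "s \<in> carrier G" using inv.hyps assms(3) by auto
  let ?f = "\<lambda>b. inv s \<otimes> b \<otimes> s"
  have "inj_on ?f R"
  proof (rule inj_onI)
    fix b b' assume bb': "b \<in> R" "b' \<in> R" "?f b = ?f b'"
    then have "s \<otimes> ?f b \<otimes> inv s = s \<otimes> ?f b' \<otimes> inv s" by simp
    moreover have "b \<in> carrier G" "b' \<in> carrier G" using bb'(1,2) assms(2) by auto
    ultimately show "b = b'" using s by (simp add: m_assoc)
  qed
  moreover have "?f ` R \<subseteq> R"
    using closed[OF inv.hyps] by blast
  ultimately have "b \<in> ?f ` R"
    using endo_inj_surj[OF assms(1)] inv.prems by blast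
  then obtain b' where b': "b' \<in> R" "b = ?f b'" by blast
  have "b' \<in> carrier G" using b'(1) assms(2) by auto
  then have "inv (inv s) \<otimes> b \<otimes> inv s = b'"
    unfolding b'(2) using s by (simp add: m_assoc)
  then show ?case using b'(1) by simp
next
  case (eng h1 h2)
  have h: "h1 \<in> carrier G" "h2 \<in> carrier G"
    using eng.hyps generate_in_carrier[OF assms(3)] by auto
  have "inv (h1 \<otimes> h2) \<otimes> b \<otimes> (h1 \<otimes> h2) = inv h2 \<otimes> (inv h1 \<otimes> b \<otimes> h1) \<otimes> h2"
    using h eng.prems assms(2) by (simp add: subsetD m_assoc inv_mult_group)
  then show ?case using eng.IH eng.prems by simp
qed

lemma word_eval_in_generate:
  "S \<subseteq> carrier G \<Longrightarrow> set w \<subseteq> S \<times> UNIV \<Longrightarrow> word_eval G w \<in> generate G S"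
proof (induction w)
  case Nil
  then show ?case by (simp add: word_eval_def generate.one)
next
  case (Cons l w)
  obtain s b where l: "l = (s, b)" by force
  have "letter_eval G l \<in> generate G S"
    using Cons.prems l by (cases b) (auto intro: generate.incl generate.inv)
  then show ?case
    using Cons by (auto simp: word_eval_def intro: generate.eng)
qed

lemma generate_eq_carrier_if_words:
  assumes "S \<subseteq> carrier G" "\<forall>g \<in> carrier G. \<exists>w. set w \<subseteq> S \<times> UNIV \<and> word_eval G w = g"
  shows "generate G S = carrier G"
proof
  show "generate G S \<subseteq> carrier G" using generate_incl[OF assms(1)] .
  show "carrier G \<subseteq> generate G S"
  proof
    fix g assume "g \<in> carrier G"
    then obtain w where "set w \<subseteq> S \<times> UNIV" "word_eval G w = g" using assms(2) by blast
    then show "g \<in> generate G S" using word_eval_in_generate[OF assms(1)] by metis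
  qed
qed

end

lemma tau_append [simp]: "tau A (u @ v) = tau A u + tau A v"
  unfolding tau_def by simp

lemma tau_replicate: "c \<in> A \<Longrightarrow> tau A (replicate k c) = k"
  unfolding tau_def by simp

lemma count_list_filter_mem: "c \<in> A \<Longrightarrow> count_list (filter (\<lambda>y. y \<in> A) u) c = count_list u c"
  by (induction u) auto

lemma tau_eq_sum_count_list:
  assumes "finite A"
  shows "tau A u = (\<Sum>c\<in>A. count_list u c)"
proof -
  have "tau A u = (\<Sum>c\<in>A. count_list (filter (\<lambda>y. y \<in> A) u) c)"
    unfolding tau_def using assms by (intro sum_count_set[symmetric]) auto
  also have "\<dots> = (\<Sum>c\<in>A. count_list u c)"
    by (simp add: count_list_filter_mem)
  finally show ?thesis .
qed

lemma count_list_gt_if_tau_gt: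
  assumes "finite A" and "card A * p < tau A u"
  shows "\<exists>c\<in>A. p < count_list u c"
proof (rule ccontr)
  assume "\<not> ?thesis"
  then have "(\<Sum>c\<in>A. count_list u c) \<le> card A * p"
    using sum_bounded_above[of A "count_list u" p] by (simp add: not_less)
  with assms show False
    using tau_eq_sum_count_list[OF assms(1)] by simp
qed

lemma fact_step_append_context:
  "fact_step G Y a b \<Longrightarrow> fact_step G Y (u @ a @ v) (u @ b @ v)"
proof (induction rule: fact_step.induct)
  case (rel1 g1 g2 u' v')
  then show ?case using fact_step.rel1[of g1 Y g2 G "u @ u'" "v' @ v"] by simp
next
  case (rel2 g1 g2 u' v')
  then show ?case using fact_step.rel2[of g1 Y g2 G "u @ u'" "v' @ v"] by simp
qed

lemma fact_eq_append_context:
  "fact_eq G Y a b \<Longrightarrow> fact_eq G Y (u @ a @ v) (u @ b @ v)"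
  unfolding fact_eq_def
  by (induction rule: equivclp_induct) (auto intro: equivclp_into_equivclp fact_step_append_context)

lemma fact_eq_append_left: "fact_eq G Y a b \<Longrightarrow> fact_eq G Y (u @ a) (u @ b)"
  using fact_eq_append_context[of G Y a b u "[]"] by simp

lemma fact_eq_append_right: "fact_eq G Y a b \<Longrightarrow> fact_eq G Y (a @ v) (b @ v)"
  using fact_eq_append_context[of G Y a b "[]" v] by simp

lemma fact_eq_refl [simp]: "fact_eq G Y a a"
  unfolding fact_eq_def by simp

lemma fact_eq_sym [sym]: "fact_eq G Y a b \<Longrightarrow> fact_eq G Y b a"
  unfolding fact_eq_def by (rule equivclp_sym)

lemma fact_eq_trans [trans]: "fact_eq G Y a b \<Longrightarrow> fact_eq G Y b c \<Longrightarrow> fact_eq G Y a c"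
  unfolding fact_eq_def by (rule equivclp_trans)

lemma fact_step_imp_fact_eq: "fact_step G Y a b \<Longrightarrow> fact_eq G Y a b"
  unfolding fact_eq_def by blast

locale conj_closed_generators = group +
  fixes Y :: "'a set"
  assumes Y_carrier: "Y \<subseteq> carrier G"
    and finite_Y: "finite Y"
    and conj_closed: "\<And>g y. g \<in> carrier G \<Longrightarrow> y \<in> Y \<Longrightarrow> g \<otimes> y \<otimes> inv g \<in> Y"
    and generate_Y: "generate G Y = carrier G"

lemma finite_C_group_imp_conj_closed_generators:
  assumes "finite_C_group G Y"
  shows "conj_closed_generators G Y"
proof -
  from assms have G: "group G" and Y: "Y \<subseteq> carrier G" "finite Y"
    and "\<And>g y. g \<in> carrier G \<Longrightarrow> y \<in> Y \<Longrightarrow> g \<otimes>\<^bsub>G\<^esub> y \<otimes>\<^bsub>G\<^esub> inv\<^bsub>G\<^esub> g \<in> Y"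
    and words: "\<forall>g \<in> carrier G. \<exists>w. set w \<subseteq> Y \<times> UNIV \<and> word_eval G w = g"
    unfolding finite_C_group_def by blast+
  with group.generate_eq_carrier_if_words[OF G Y(1) words] show ?thesis
    by (simp add: conj_closed_generators_def conj_closed_generators_axioms_def)
qed

context conj_closed_generators
begin

lemma Y_in_carrier: "y \<in> Y \<Longrightarrow> y \<in> carrier G"
  using Y_carrier by auto

lemma inv_conj_closed: "g \<in> carrier G \<Longrightarrow> y \<in> Y \<Longrightarrow> inv g \<otimes> y \<otimes> g \<in> Y"
  using conj_closed[of "inv g" y] by simp

lemma conj_class_subset_Y: "y \<in> Y \<Longrightarrow> conj_class G y \<subseteq> Y"
  unfolding conj_class_def using conj_closed by auto

text \<open>Conjugation by the powers of \<open>y\<close> acts on the finite set \<open>Y\<close>, so two different powers act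
  alike; their quotient commutes with the generators \<open>Y\<close>.\<close>

lemma exists_central_power:
  assumes "y \<in> Y"
  obtains d :: nat where "d \<ge> 1" "central G (y [^] d)"
proof -
  have y: "y \<in> carrier G" using assms Y_in_carrier by simp
  define f where "f k = restrict (\<lambda>z. y [^] k \<otimes> z \<otimes> inv (y [^] k)) Y" for k :: nat
  have "range f \<subseteq> Y \<rightarrow>\<^sub>E Y"
    unfolding f_def using conj_closed y by auto
  then have "finite (range f)"
    by (rule finite_subset) (simp add: finite_PiE finite_Y)
  then have "\<not> inj f"
    using finite_imageD infinite_UNIV_nat by blast
  then obtain a b where ab: "a < b" "f a = f b"
    unfolding inj_def by (metis linorder_neqE_nat)
  define d where "d = b - a"
  have b: "y [^] b = y [^] a \<otimes> y [^] d"
    using ab(1) y unfolding d_def by (simp add: nat_pow_mult)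
  have "y [^] d \<otimes> z = z \<otimes> y [^] d" if "z \<in> Y" for z
  proof (rule conj_eq_imp_commute)
    show "y [^] a \<otimes> z \<otimes> inv (y [^] a) = y [^] a \<otimes> y [^] d \<otimes> z \<otimes> inv (y [^] a \<otimes> y [^] d)"
      using fun_cong[OF ab(2), of z] that unfolding f_def b by simp
  qed (use y that Y_in_carrier in auto)
  then have "central G (y [^] d)"
    using central_if_commutes_with_generators[OF generate_Y Y_carrier] y by simp
  moreover have "d \<ge> 1" using ab(1) unfolding d_def by simp
  ultimately show ?thesis using that by blast
qed

lemma exists_common_central_power:
  assumes "finite C" "C \<subseteq> Y"
  shows "\<exists>p::nat \<ge> 1. \<forall>y\<in>C. central G (y [^] p)"
proof -
  have "\<forall>y\<in>C. \<exists>d::nat. d \<ge> 1 \<and> central G (y [^] d)"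
    using exists_central_power assms(2) by (metis subsetD)
  then obtain d :: "'a \<Rightarrow> nat" where d: "\<And>y. y \<in> C \<Longrightarrow> d y \<ge> 1 \<and> central G (y [^] d y)"
    by metis
  define p where "p = (\<Prod>y\<in>C. d y)"
  have "p \<ge> 1"
    unfolding p_def using d by (simp add: Suc_le_eq prod_pos)
  moreover have "central G (y [^] p)" if yC: "y \<in> C" for y
  proof -
    obtain m where m: "p = d y * m"
      using dvd_prodI[OF assms(1) yC, of d] unfolding p_def by (auto elim: dvdE)
    have y: "y \<in> carrier G" using yC assms(2) Y_in_carrier by auto
    have "central G ((y [^] d y) [^] m)"
      using d[OF yC] y by (simp add: central_nat_pow)
    then show ?thesis using m y by (simp add: nat_pow_pow)
  qed
  ultimately show ?thesis by blast
qed

lemma class_period_central: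
  assumes "C \<subseteq> Y" "y \<in> C"
  shows "central G (y [^] class_period G C)"
proof -
  have "\<exists>p::nat \<ge> 1. \<forall>y\<in>C. central G (y [^] p)"
    using exists_common_central_power assms(1) finite_subset[OF assms(1) finite_Y] by blast
  then have "class_period G C \<ge> 1 \<and> (\<forall>y\<in>C. central G (y [^] class_period G C))"
    unfolding class_period_def by (rule LeastI_ex)
  then show ?thesis using assms(2) by blast
qed

lemma fact_step_set_subset_iff:
  "fact_step G Y a b \<Longrightarrow> set a \<subseteq> Y \<longleftrightarrow> set b \<subseteq> Y"
proof (induction rule: fact_step.induct)
  case (rel1 g1 g2 u v)
  then show ?case using inv_conj_closed Y_in_carrier by auto
next
  case (rel2 g1 g2 u v)
  then show ?case using conj_closed Y_in_carrier by auto
qed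

lemma fact_step_generate:
  "fact_step G Y a b \<Longrightarrow> set a \<subseteq> Y \<Longrightarrow> generate G (set a) = generate G (set b)"
proof (induction rule: fact_step.induct)
  case (rel1 g1 g2 u v)
  let ?A = "set (u @ [g2] @ v)"
  have "generate G (insert (inv g2 \<otimes> g1 \<otimes> g2) ?A) = generate G (insert g1 ?A)"
    using rel1 Y_carrier by (intro generate_insert_conj) (auto intro: generate.incl)
  then show ?case by (simp add: insert_commute)
next
  case (rel2 g1 g2 u v)
  let ?A = "set (u @ [g1] @ v)"
  have g1: "g1 \<in> carrier G" using rel2 Y_in_carrier by simp
  have "generate G (insert (inv (inv g1) \<otimes> g2 \<otimes> inv g1) ?A) = generate G (insert g2 ?A)"
    using rel2 Y_carrier by (intro generate_insert_conj) (auto intro: generate.inv)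
  then show ?case using g1 by (simp add: insert_commute)
qed

lemma fact_step_tau:
  assumes "fact_step G Y a b" "y \<in> carrier G"
  shows "tau (conj_class G y) a = tau (conj_class G y) b"
  using assms(1)
proof (induction rule: fact_step.induct)
  case (rel1 g1 g2 u v)
  then show ?case
    using conj_class_inv_conj_iff[of g1 g2 y] assms(2) Y_in_carrier by (simp add: tau_def)
next
  case (rel2 g1 g2 u v)
  then show ?case
    using conj_class_conj_iff[of g2 g1 y] assms(2) Y_in_carrier by (simp add: tau_def)
qed

lemma fact_eq_generate:
  assumes "fact_eq G Y a b" "set a \<subseteq> Y"
  shows "generate G (set a) = generate G (set b)"
  using assms(1) unfolding fact_eq_def
  by (rule equivclp_invariant[where P = "\<lambda>x. set x \<subseteq> Y"])
    (simp_all add: assms(2) fact_step_set_subset_iff fact_step_generate)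

lemma fact_eq_tau:
  assumes "fact_eq G Y a b" "y \<in> carrier G"
  shows "tau (conj_class G y) a = tau (conj_class G y) b"
  using assms(1) unfolding fact_eq_def
  by (rule equivclp_invariant[where P = "\<lambda>_. True"]) (simp_all add: assms(2) fact_step_tau)

lemma fact_eq_pass_right:
  assumes "g \<in> Y" "c \<in> Y"
  shows "fact_eq G Y (g # replicate k c) (replicate k c @ [inv (c [^] k) \<otimes> g \<otimes> c [^] k])"
  using assms(1)
proof (induction k arbitrary: g)
  case (Suc k)
  have g: "g \<in> carrier G" and c: "c \<in> carrier G" using Suc.prems assms(2) Y_in_carrier by auto
  let ?g = "inv c \<otimes> g \<otimes> c"
  have "fact_eq G Y (g # replicate (Suc k) c) (c # ?g # replicate k c)"
    using fact_step_imp_fact_eq[OF fact_step.rel1[of g Y c G "[]" "replicate k c"]] Suc.prems assms(2)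
    by simp
  also have "fact_eq G Y \<dots> (c # replicate k c @ [inv (c [^] k) \<otimes> ?g \<otimes> c [^] k])"
    using fact_eq_append_left[OF Suc.IH[of ?g], of "[c]"] Suc.prems inv_conj_closed c by simp
  also have "inv (c [^] k) \<otimes> ?g \<otimes> c [^] k = inv (c [^] Suc k) \<otimes> g \<otimes> c [^] Suc k"
    unfolding nat_pow_Suc2[OF c] using g c by (simp add: m_assoc inv_mult_group)
  finally show ?case by simp
qed (simp add: Y_in_carrier)

lemma fact_eq_pass_left:
  assumes "a \<in> Y" "g \<in> Y"
  shows "fact_eq G Y (replicate k a @ [g]) (g # replicate k (inv g \<otimes> a \<otimes> g))"
proof (induction k)
  case (Suc k)
  let ?b = "inv g \<otimes> a \<otimes> g"
  have "fact_eq G Y (replicate (Suc k) a @ [g]) (a # g # replicate k ?b)"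
    using fact_eq_append_left[OF Suc.IH, of "[a]"] by simp
  also have "fact_eq G Y \<dots> (g # ?b # replicate k ?b)"
    using fact_step_imp_fact_eq[OF fact_step.rel1[of a Y g G "[]" "replicate k ?b"]] assms by simp
  finally show ?case by simp
qed simp

lemma fact_eq_central_block_commute:
  assumes "a \<in> Y" "central G (a [^] k)" "set w \<subseteq> Y"
  shows "fact_eq G Y (replicate k a @ w) (w @ replicate k a)"
  using assms(3)
proof (induction w)
  case (Cons g w)
  have a: "a \<in> carrier G" and g: "g \<in> carrier G" using assms(1) Cons.prems Y_in_carrier by auto
  have "g \<otimes> a [^] k = a [^] k \<otimes> g"
    using assms(2) g unfolding central_def by simp
  then have "inv (a [^] k) \<otimes> g \<otimes> a [^] k = g"
    using a g by (simp add: m_assoc)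
  then have "fact_eq G Y (g # replicate k a) (replicate k a @ [g])"
    using fact_eq_pass_right[of g a k] assms(1) Cons.prems by simp
  then have "fact_eq G Y (replicate k a @ [g] @ w) (g # replicate k a @ w)"
    using fact_eq_append_right fact_eq_sym by fastforce
  also have "fact_eq G Y \<dots> (g # w @ replicate k a)"
    using fact_eq_append_left[OF Cons.IH, of "[g]"] Cons.prems by simp
  finally show ?case by simp
qed simp

lemma fact_eq_gather:
  assumes "set u \<subseteq> Y" "c \<in> Y"
  obtains v where "fact_eq G Y u (replicate (count_list u c) c @ v)" "set v \<subseteq> Y"
  using assms(1)
proof (induction u arbitrary: thesis)
  case Nil
  then show ?case using Nil.prems(1)[of "[]"] by simp
next
  case (Cons x u)
  let ?m = "count_list u c"
  obtain v where v: "fact_eq G Y u (replicate ?m c @ v)" "set v \<subseteq> Y"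
    using Cons.IH Cons.prems(2) by auto
  have uv: "fact_eq G Y (x # u) (x # replicate ?m c @ v)"
    using fact_eq_append_left[OF v(1), of "[x]"] by simp
  show ?case
  proof (cases "x = c")
    case True
    then show ?thesis using Cons.prems(1) uv v(2) by simp
  next
    case False
    let ?x = "inv (c [^] ?m) \<otimes> x \<otimes> c [^] ?m"
    have x: "x \<in> Y" using Cons.prems(2) by simp
    note uv
    also have "fact_eq G Y (x # replicate ?m c @ v) (replicate ?m c @ ?x # v)"
      using fact_eq_append_right[OF fact_eq_pass_right[OF x assms(2)], where v = v] by simp
    finally show ?thesis
      using Cons.prems(1)[of "?x # v"] False v(2) inv_conj_closed x assms(2) Y_in_carrier by simp
  qed
qed

end

locale class_blocks = conj_closed_generators +
  fixes y0 :: 'a and p :: nat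
  assumes y0_in_Y: "y0 \<in> Y"
    and central_block: "\<And>y. y \<in> conj_class G y0 \<Longrightarrow> central G (y [^] p)"
begin

abbreviation C :: "'a set" where "C \<equiv> conj_class G y0"

lemma C_subset_Y: "C \<subseteq> Y"
  using conj_class_subset_Y[OF y0_in_Y] .

lemma inv_conj_in_C: "b \<in> C \<Longrightarrow> g \<in> carrier G \<Longrightarrow> inv g \<otimes> b \<otimes> g \<in> C"
  using conj_class_inv_conj_iff[of b g y0] C_subset_Y y0_in_Y Y_in_carrier by auto

lemma fact_eq_block_conj:
  assumes "a \<in> C" "set w \<subseteq> Y" "g \<in> set w"
  shows "fact_eq G Y (replicate p a @ w) (replicate p (inv g \<otimes> a \<otimes> g) @ w)"
proof -
  obtain w1 w2 where w: "w = w1 @ g # w2" using split_list[OF assms(3)] by blast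
  let ?b = "inv g \<otimes> a \<otimes> g"
  have a: "a \<in> Y" and g: "g \<in> Y" using assms C_subset_Y by auto
  have b: "?b \<in> C" using inv_conj_in_C assms(1) g Y_in_carrier by simp
  have w12: "set w1 \<subseteq> Y" "set w2 \<subseteq> Y" using assms(2) w by auto
  note commute = fact_eq_central_block_commute[OF _ central_block]
  have "fact_eq G Y (replicate p a @ w1 @ g # w2) (w1 @ replicate p a @ g # w2)"
    using fact_eq_append_right[OF commute[OF a assms(1) w12(1)], where v = "g # w2"] by simp
  also have "fact_eq G Y \<dots> (w1 @ g # replicate p ?b @ w2)"
    using fact_eq_append_context[OF fact_eq_pass_left[OF a g], where u = w1 and v = w2] by simp
  also have "fact_eq G Y \<dots> (w1 @ g # w2 @ replicate p ?b)"
    using fact_eq_append_left[OF commute[OF _ b w12(2)], where u = "w1 @ [g]"] b C_subset_Y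
    by auto
  also have "fact_eq G Y \<dots> (replicate p ?b @ w1 @ g # w2)"
    using fact_eq_sym[OF commute[OF _ b assms(2)]] b C_subset_Y w by auto
  finally show ?thesis unfolding w .
qed

lemma fact_eq_block_replace:
  assumes "a \<in> C" "c \<in> C" "set w \<subseteq> Y" "generate G (set w) = carrier G"
  shows "fact_eq G Y (replicate p a @ w) (replicate p c @ w)"
proof -
  \<comment> \<open>the classes reachable from \<open>a\<close> are closed under conjugation by the factors of \<open>w\<close>,
    hence by the group they generate\<close>
  define R where "R = {b \<in> C. fact_eq G Y (replicate p a @ w) (replicate p b @ w)}"
  have y0: "y0 \<in> carrier G" using y0_in_Y Y_in_carrier by simp
  obtain h where h: "h \<in> carrier G" "inv h \<otimes> a \<otimes> h = c"
    using conj_class_conjugate[OF assms(1,2) y0] .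
  have "inv h \<otimes> a \<otimes> h \<in> R"
  proof (rule conj_closed_generate)
    show "finite R"
      unfolding R_def using finite_subset[OF C_subset_Y finite_Y] by simp
    show "R \<subseteq> carrier G" "set w \<subseteq> carrier G"
      unfolding R_def using C_subset_Y assms(3) Y_carrier by auto
    show "inv g \<otimes> b \<otimes> g \<in> R" if "g \<in> set w" "b \<in> R" for g b
      using that assms(3) fact_eq_block_conj[of b w g] fact_eq_trans inv_conj_in_C Y_carrier
      unfolding R_def by blast
    show "h \<in> generate G (set w)" using h(1) assms(4) by simp
    show "a \<in> R" unfolding R_def using assms(1) by simp
  qed
  then show ?thesis unfolding R_def h(2) by simp
qed

lemma fact_eq_extract_block:
  assumes "set u \<subseteq> Y" "card C * p < tau C u"
  obtains c v where "c \<in> C" "fact_eq G Y u (replicate p c @ v)" "c \<in> set v" "set v \<subseteq> Y"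
    "tau C u = p + tau C v"
proof -
  have finite_C: "finite C" using finite_subset[OF C_subset_Y finite_Y] .
  obtain c where c: "c \<in> C" "p < count_list u c"
    using count_list_gt_if_tau_gt[OF finite_C assms(2)] by blast
  have cY: "c \<in> Y" using c(1) C_subset_Y by auto
  obtain v0 where v0: "fact_eq G Y u (replicate (count_list u c) c @ v0)" "set v0 \<subseteq> Y"
    using fact_eq_gather[OF assms(1) cY] .
  define v where "v = replicate (count_list u c - p) c @ v0"
  have "replicate (count_list u c) c @ v0 = replicate p c @ v"
    unfolding v_def using c(2) by (simp add: replicate_add[symmetric])
  then have uv: "fact_eq G Y u (replicate p c @ v)" using v0(1) by simp
  have "tau C u = tau C (replicate p c @ v)"
    using fact_eq_tau[OF uv] y0_in_Y Y_in_carrier by simp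
  then have "tau C u = p + tau C v" using tau_replicate[OF c(1)] by simp
  moreover have "c \<in> set v" "set v \<subseteq> Y" unfolding v_def using c(2) v0(2) cY by auto
  ultimately show ?thesis using that c(1) uv by blast
qed

lemma fact_eq_extract_blocks:
  assumes "set s2 \<subseteq> Y" "set zs \<subseteq> C" "set u \<subseteq> Y" "full_fact G (u @ s2)"
    and "(length zs + card C) * p < tau C u"
  shows "\<exists>si. set si \<subseteq> Y \<and> full_fact G (si @ s2) \<and>
    fact_eq G Y (u @ s2) (concat (map (\<lambda>y. replicate p y) zs) @ si @ s2)"
  using assms(2-5)
proof (induction zs arbitrary: u)
  case Nil
  then show ?case by auto
next
  case (Cons z zs)
  have "card C * p < tau C u" using Cons.prems(4) by (simp add: add_mult_distrib)
  then obtain c v where cv: "c \<in> C" "fact_eq G Y u (replicate p c @ v)" "c \<in> set v"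
      "set v \<subseteq> Y" "tau C u = p + tau C v"
    using fact_eq_extract_block[OF Cons.prems(2)] by blast
  have cvs: "fact_eq G Y (u @ s2) (replicate p c @ v @ s2)"
    using fact_eq_append_right[OF cv(2), where v = s2] by simp
  have vs: "set (v @ s2) \<subseteq> Y" using cv(4) assms(1) by auto
  have "set (replicate p c @ v @ s2) = set (v @ s2)" using cv(3) by auto
  then have "generate G (set (v @ s2)) = generate G (set (replicate p c @ v @ s2))"
    by simp
  also have "\<dots> = carrier G"
    using fact_eq_generate[OF cvs] Cons.prems(2,3) assms(1) unfolding full_fact_def by simp
  finally have gen: "generate G (set (v @ s2)) = carrier G" .
  have "(length zs + card C) * p < tau C v" using Cons.prems(4) cv(5) by simp
  then obtain si where si: "set si \<subseteq> Y" "full_fact G (si @ s2)"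
      "fact_eq G Y (v @ s2) (concat (map (\<lambda>y. replicate p y) zs) @ si @ s2)"
    using Cons.IH[OF _ cv(4)] Cons.prems(1) gen unfolding full_fact_def by auto
  note cvs
  also have "fact_eq G Y (replicate p c @ v @ s2) (replicate p z @ v @ s2)"
    using fact_eq_block_replace[OF cv(1) _ vs gen] Cons.prems(1) by simp
  also have "fact_eq G Y \<dots> (replicate p z @ concat (map (\<lambda>y. replicate p y) zs) @ si @ s2)"
    using fact_eq_append_left[OF si(3)] .
  finally show ?case using si(1,2) by auto
qed

end

theorem corollary2p8:
  fixes G :: "('g, 'b) monoid_scheme" and Y :: "'g set"
    and s' s'' :: "'g list" and y0 :: 'g and ys :: "'g list"
  assumes "finite_C_group G Y"
    and "set s' \<subseteq> Y" and "set s'' \<subseteq> Y"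
    and "full_fact G (s' @ s'')"
    and "y0 \<in> Y"
    and "distinct ys" and "set ys = conj_class G y0"
    and "tau (conj_class G y0) (s' @ s'')
           \<ge> 2 * card (conj_class G y0) * class_period G (conj_class G y0) + 1"
    and "tau (conj_class G y0) s'' = 0"
  shows "\<exists>si. set si \<subseteq> Y \<and> full_fact G (si @ s'') \<and>
           fact_eq G Y (s' @ s'')
             (concat (map (\<lambda>y. replicate (class_period G (conj_class G y0)) y) ys) @ si @ s'')"
proof -
  let ?C = "conj_class G y0" and ?p = "class_period G (conj_class G y0)"
  interpret conj_closed_generators G Y
    using finite_C_group_imp_conj_closed_generators[OF assms(1)] .
  interpret class_blocks G Y y0 ?p
    using assms(5) class_period_central[OF conj_class_subset_Y[OF assms(5)]]
    by unfold_locales simp_all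
  have "length ys = card ?C" using distinct_card[OF assms(6)] assms(7) by simp
  then have "(length ys + card ?C) * ?p < tau ?C s'"
    using assms(8,9) by (simp add: algebra_simps)
  then show ?thesis
    using fact_eq_extract_blocks[OF assms(3) _ assms(2,4)] assms(7) by simp
qed

end
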